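(* Let $\mathcal H$ be a separable complex Hilbert space, $A\in L(\mathcal H)^+$ and $T\in L(\mathcal H)$. Then $T$ is an $A$-projection if and only if $P_{\overline{R(A)}}T$ is idempotent (i.e. $(P_{\overline{R(A)}}T)^2=P_{\overline{R(A)}}T$) and $A$-selfadjoint.
   Context: $L(\mathcal H)^+$ denotes positive (semidefinite) bounded operators; $P_{\mathcal M}$ is the orthogonal projection onto a closed subspace $\mathcal M$. For $A\in L(\mathcal H)^+$, $\|x\|_A=\langle Ax,x\rangle^{1/2}$. An operator $C\in L(\mathcal H)$ is $A$-selfadjoint if $AC=C^*A$. $T$ is an $A$-projection if $\|y-Ty\|_A\le\|y-s\|_A$ for all $y\in\mathcal H$ and all $s\in\overline{R(T)}$. *)

theory Defs
  imports "HOL-Analysis.Analysis"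
begin

class complex_hilbert = real_normed_vector + complete_space +
  fixes scaleC :: "complex \<Rightarrow> 'a \<Rightarrow> 'a"
    and cinner :: "'a \<Rightarrow> 'a \<Rightarrow> complex"
  assumes scaleC_add_right: "scaleC a (x + y) = scaleC a x + scaleC a y"
    and scaleC_add_left: "scaleC (a + b) x = scaleC a x + scaleC b x"
    and scaleC_scaleC: "scaleC a (scaleC b x) = scaleC (a * b) x"
    and scaleC_one: "scaleC 1 x = x"
    and scaleR_scaleC: "scaleR r x = scaleC (complex_of_real r) x"
    and cinner_commute: "cinner x y = cnj (cinner y x)"
    and cinner_add_left: "cinner (x + y) z = cinner x z + cinner y z"
    and cinner_scaleC_left: "cinner (scaleC a x) y = a * cinner x y"
    and cinner_self_norm: "cinner x x = complex_of_real ((norm x)\<^sup>2)"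

definition separable_hilbert :: "'a::complex_hilbert itself \<Rightarrow> bool" where
  "separable_hilbert _ \<longleftrightarrow> (\<exists>D::'a set. countable D \<and> closure D = UNIV)"

definition bounded_clinear :: "('a::complex_hilbert \<Rightarrow> 'b::complex_hilbert) \<Rightarrow> bool" where
  "bounded_clinear f \<longleftrightarrow> bounded_linear f \<and> (\<forall>c x. f (scaleC c x) = scaleC c (f x))"

definition positive_op :: "('a::complex_hilbert \<Rightarrow> 'a) \<Rightarrow> bool" where
  "positive_op A \<longleftrightarrow> bounded_clinear A \<and>
     (\<forall>x. Im (cinner (A x) x) = 0 \<and> 0 \<le> Re (cinner (A x) x))"

definition adjoint :: "('a::complex_hilbert \<Rightarrow> 'a) \<Rightarrow> ('a \<Rightarrow> 'a)" where
  "adjoint C = (THE D. \<forall>x y. cinner (C x) y = cinner x (D y))"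

definition orth_proj :: "'a::complex_hilbert set \<Rightarrow> 'a \<Rightarrow> 'a" where
  "orth_proj M x = (THE y. y \<in> M \<and> (\<forall>m\<in>M. cinner (x - y) m = 0))"

definition A_norm :: "('a::complex_hilbert \<Rightarrow> 'a) \<Rightarrow> 'a \<Rightarrow> real" where
  "A_norm A x = sqrt (Re (cinner (A x) x))"

definition A_selfadjoint :: "('a::complex_hilbert \<Rightarrow> 'a) \<Rightarrow> ('a \<Rightarrow> 'a) \<Rightarrow> bool" where
  "A_selfadjoint A C \<longleftrightarrow> A \<circ> C = adjoint C \<circ> A"

definition A_projection :: "('a::complex_hilbert \<Rightarrow> 'a) \<Rightarrow> ('a \<Rightarrow> 'a) \<Rightarrow> bool" where
  "A_projection A T \<longleftrightarrow>
     (\<forall>y. \<forall>s \<in> closure (range T). A_norm A (y - T y) \<le> A_norm A (y - s))"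

end

theory Submission
  imports Defs
begin

text \<open>Write \<open>P\<close> for the orthogonal projection onto \<open>closure (range A)\<close>.
Since \<open>A\<close> is hermitian, \<open>A P = A\<close> and \<open>A\<close> is injective on the range of \<open>P\<close>.
Perturbing \<open>s = T y\<close> to \<open>T y + t T w\<close> shows that \<open>T\<close> is an \<open>A\<close>-projection exactly when every
residual \<open>y - T y\<close> is \<open>A\<close>-orthogonal to \<open>R(T)\<close>; by a Pythagoras argument this suffices, the closure
of \<open>R(T)\<close> being harmless by continuity. Residual orthogonality amounts to \<open>A T = T\<^sup>* A\<close> together
with \<open>A T\<^sup>2 = A T\<close>, and the two properties of \<open>P\<close> translate these into \<open>P T\<close> being
\<open>A\<close>-selfadjoint and idempotent.\<close>

lemma cinner_zero_left [simp]: "cinner 0 y = 0"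
  using cinner_add_left[of 0 0 y] by simp

lemma cinner_diff_left: "cinner (x - y) z = cinner x z - cinner y z"
  using cinner_add_left[of "x - y" y z] by (simp add: eq_diff_eq)

lemma cinner_zero_right [simp]: "cinner x 0 = 0"
  by (subst cinner_commute) simp

lemma cinner_add_right: "cinner x (y + z) = cinner x y + cinner x z"
  by (subst (1 2 3) cinner_commute) (simp add: cinner_add_left)

lemma cinner_diff_right: "cinner x (y - z) = cinner x y - cinner x z"
  by (subst (1 2 3) cinner_commute) (simp add: cinner_diff_left)

lemma cinner_scaleC_right: "cinner x (scaleC a y) = cnj a * cinner x y"
  by (subst (1 2) cinner_commute) (simp add: cinner_scaleC_left)

lemma cinner_eq_zero_iff: "cinner x x = 0 \<longleftrightarrow> x = 0"
  by (simp add: cinner_self_norm)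

lemma cinner_ext_left: "(\<And>w. cinner a w = cinner b w) \<Longrightarrow> a = b"
  by (metis cinner_diff_left cinner_eq_zero_iff right_minus_eq)

lemma cinner_ext_right:
  assumes "\<And>w. cinner w a = cinner w b"
  shows "a = b"
proof (rule cinner_ext_left)
  show "cinner a w = cinner b w" for w
    using assms[of w] by (subst (1 2) cinner_commute) simp
qed

lemma cinner_eq_zero_commute: "cinner x y = 0 \<longleftrightarrow> cinner y x = 0"
  by (subst cinner_commute) simp

lemma norm_scaleC: "norm (scaleC a x) = cmod a * norm x"
proof -
  have "cinner (scaleC a x) (scaleC a x) = a * cnj a * cinner x x"
    by (simp add: cinner_scaleC_left cinner_scaleC_right mult.assoc)
  then have "complex_of_real ((norm (scaleC a x))\<^sup>2) = complex_of_real ((cmod a * norm x)\<^sup>2)"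
    by (simp add: cinner_self_norm power_mult_distrib complex_norm_square[symmetric])
  then have "(norm (scaleC a x))\<^sup>2 = (cmod a * norm x)\<^sup>2"
    by (rule of_real_eq_iff[THEN iffD1])
  then show ?thesis
    by (simp add: power2_eq_iff_nonneg)
qed

lemma bounded_linear_scaleC: "bounded_linear (scaleC a)"
proof (rule bounded_linear_intro[where K = "cmod a"])
  show "scaleC a (x + y) = scaleC a x + scaleC a y" for x y
    by (rule scaleC_add_right)
  show "scaleC a (scaleR r x) = scaleR r (scaleC a x)" for r x
    by (simp add: scaleR_scaleC scaleC_scaleC mult.commute)
  show "norm (scaleC a x) \<le> norm x * cmod a" for x
    by (simp add: norm_scaleC)
qed

lemma norm_add_square: "(norm (x + y))\<^sup>2 = (norm x)\<^sup>2 + (norm y)\<^sup>2 + 2 * Re (cinner x y)"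
proof -
  have "cinner (x + y) (x + y) = cinner x x + cinner y y + (cinner x y + cnj (cinner x y))"
    by (simp add: cinner_add_left cinner_add_right cinner_commute[of y x])
  then have "Re (cinner (x + y) (x + y)) = Re (cinner x x) + Re (cinner y y) + 2 * Re (cinner x y)"
    by simp
  then show ?thesis
    by (simp add: cinner_self_norm)
qed

lemma norm_diff_square: "(norm (x - y))\<^sup>2 = (norm x)\<^sup>2 + (norm y)\<^sup>2 - 2 * Re (cinner x y)"
  using norm_add_square[of x "- y"] cinner_diff_right[of x 0 y] by simp

lemma cinner_polarization:
  "cinner x y =
     complex_of_real (((norm (x + y))\<^sup>2 - (norm (x - y))\<^sup>2) / 4)
     + \<i> * complex_of_real (((norm (x + scaleC \<i> y))\<^sup>2 - (norm (x - scaleC \<i> y))\<^sup>2) / 4)"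
proof -
  have "((norm (x + y))\<^sup>2 - (norm (x - y))\<^sup>2) / 4 = Re (cinner x y)"
    by (simp add: norm_add_square norm_diff_square)
  moreover have "((norm (x + scaleC \<i> y))\<^sup>2 - (norm (x - scaleC \<i> y))\<^sup>2) / 4 = Im (cinner x y)"
    by (simp add: norm_add_square norm_diff_square cinner_scaleC_right)
  ultimately show ?thesis
    by (simp add: complex_eq_iff)
qed

lemma tendsto_cinner [tendsto_intros]:
  fixes f g :: "_ \<Rightarrow> 'a::complex_hilbert"
  assumes "(f \<longlongrightarrow> a) F" "(g \<longlongrightarrow> b) F"
  shows "((\<lambda>t. cinner (f t) (g t)) \<longlongrightarrow> cinner a b) F"
proof -
  have scaled: "((\<lambda>t. scaleC \<i> (g t)) \<longlongrightarrow> scaleC \<i> b) F"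
    by (rule bounded_linear.tendsto[OF bounded_linear_scaleC assms(2)])
  show ?thesis
    by (subst (1 2) cinner_polarization) (intro tendsto_intros assms scaled, simp_all)
qed

lemma continuous_on_cinner [continuous_intros]:
  fixes f g :: "_ \<Rightarrow> 'a::complex_hilbert"
  assumes "continuous_on S f" "continuous_on S g"
  shows "continuous_on S (\<lambda>t. cinner (f t) (g t))"
  using assms unfolding continuous_on_def by (auto intro: tendsto_cinner)

lemma bounded_clinear_add: "bounded_clinear f \<Longrightarrow> f (x + y) = f x + f y"
  unfolding bounded_clinear_def by (simp add: linear_add bounded_linear.linear)

lemma bounded_clinear_diff: "bounded_clinear f \<Longrightarrow> f (x - y) = f x - f y"
  unfolding bounded_clinear_def by (simp add: linear_diff bounded_linear.linear)

lemma bounded_clinear_scaleC: "bounded_clinear f \<Longrightarrow> f (scaleC c x) = scaleC c (f x)"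
  unfolding bounded_clinear_def by blast

lemma bounded_clinear_continuous_on: "bounded_clinear f \<Longrightarrow> continuous_on S f"
  unfolding bounded_clinear_def by (simp add: linear_continuous_on)

definition csubspace :: "'a::complex_hilbert set \<Rightarrow> bool" where
  "csubspace M \<longleftrightarrow> 0 \<in> M \<and> (\<forall>x\<in>M. \<forall>y\<in>M. x + y \<in> M) \<and> (\<forall>c. \<forall>x\<in>M. scaleC c x \<in> M)"

lemma csubspace_scaleR: "csubspace M \<Longrightarrow> x \<in> M \<Longrightarrow> scaleR r x \<in> M"
  unfolding csubspace_def by (simp add: scaleR_scaleC)

lemma csubspace_diff:
  assumes "csubspace M" "x \<in> M" "y \<in> M"
  shows "x - y \<in> M"
proof -
  have "x + scaleR (- 1) y \<in> M"
    using assms csubspace_scaleR[OF assms(1,3)] unfolding csubspace_def by blast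
  then show ?thesis
    by simp
qed

lemma csubspace_closure:
  assumes "csubspace S"
  shows "csubspace (closure S)"
proof -
  have scale: "scaleC c ` closure S \<subseteq> closure S" for c
  proof (rule image_closure_subset)
    show "continuous_on (closure S) (scaleC c)"
      by (rule linear_continuous_on[OF bounded_linear_scaleC])
    show "scaleC c ` S \<subseteq> closure S"
      using assms closure_subset unfolding csubspace_def by blast
  qed simp
  have translate_by_S: "(\<lambda>x. x + s) ` closure S \<subseteq> closure S" if "s \<in> S" for s
  proof (rule image_closure_subset)
    show "continuous_on (closure S) (\<lambda>x. x + s)"
      by (intro continuous_intros)
    show "(\<lambda>x. x + s) ` S \<subseteq> closure S"
      using assms that closure_subset unfolding csubspace_def by blast
  qed simp
  have translate: "(\<lambda>x. a + x) ` closure S \<subseteq> closure S" if "a \<in> closure S" for a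
  proof (rule image_closure_subset)
    show "continuous_on (closure S) (\<lambda>x. a + x)"
      by (intro continuous_intros)
    show "(\<lambda>x. a + x) ` S \<subseteq> closure S"
      using translate_by_S that by blast
  qed simp
  show ?thesis
    unfolding csubspace_def
  proof (intro conjI ballI allI)
    show "0 \<in> closure S"
      using assms closure_subset unfolding csubspace_def by blast
    show "x + y \<in> closure S" if "x \<in> closure S" "y \<in> closure S" for x y
      using translate[OF that(1)] that(2) by blast
    show "scaleC c x \<in> closure S" if "x \<in> closure S" for c x
      using scale[of c] that by blast
  qed
qed

lemma csubspace_range:
  fixes f :: "'a::complex_hilbert \<Rightarrow> 'b::complex_hilbert"
  assumes "bounded_clinear f"
  shows "csubspace (range f)"
  unfolding csubspace_def
proof (intro conjI ballI allI)
  show "0 \<in> range f"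
    using bounded_clinear_diff[OF assms, of 0 0] by (simp add: image_iff) metis
  show "x + y \<in> range f" if "x \<in> range f" "y \<in> range f" for x y
    using that by (auto simp flip: bounded_clinear_add[OF assms])
  show "scaleC c x \<in> range f" if "x \<in> range f" for c x
    using that by (auto simp flip: bounded_clinear_scaleC[OF assms])
qed

lemma complex_eq_0_if_quadratic_nonneg:
  fixes a :: complex and b :: real
  assumes "0 \<le> b" and nonneg: "\<And>t. 0 \<le> b * (cmod t)\<^sup>2 - 2 * Re (cnj t * a)"
  shows "a = 0"
proof -
  define r where "r = 1 / (b + 1)"
  define q where "q = (cmod a)\<^sup>2"
  have r: "0 < r" "b * r < 1"
    using \<open>0 \<le> b\<close> by (simp_all add: r_def field_simps)
  have "Re (cnj (complex_of_real r * a) * a) = r * q"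
    unfolding q_def by (simp add: cmod_power2 algebra_simps flip: power2_eq_square)
  then have "0 \<le> b * (r\<^sup>2 * q) - 2 * (r * q)"
    using nonneg[of "complex_of_real r * a"] by (simp add: q_def norm_mult power_mult_distrib)
  then have "0 \<le> (r * q) * (b * r - 2)"
    by (simp add: algebra_simps power2_eq_square)
  moreover have "b * r - 2 < 0"
    using r by simp
  ultimately have "r * q \<le> 0"
    by (simp add: zero_le_mult_iff)
  with r have "q \<le> 0"
    by (simp add: mult_le_0_iff)
  then show ?thesis
    by (simp add: q_def)
qed

lemma minimizing_sequence_Cauchy:
  fixes x :: "'a::complex_hilbert"
  assumes "csubspace M"
    and lower: "\<And>m. m \<in> M \<Longrightarrow> d \<le> (norm (x - m))\<^sup>2"
    and mem: "\<And>n. u n \<in> M"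
    and approx: "\<And>n. (norm (x - u n))\<^sup>2 < d + inverse (real (Suc n))"
  shows "Cauchy u"
proof -
  have bound: "(norm (u i - u j))\<^sup>2 < 2 * inverse (real (Suc i)) + 2 * inverse (real (Suc j))" for i j
  proof -
    have "scaleR (1/2) (u i + u j) \<in> M"
      using assms(1) mem by (simp add: csubspace_def csubspace_scaleR)
    then have "d \<le> (norm (x - scaleR (1/2) (u i + u j)))\<^sup>2"
      by (rule lower)
    moreover have "(x - u i) + (x - u j) = scaleR 2 (x - scaleR (1/2) (u i + u j))"
      by (simp add: algebra_simps scaleR_2)
    then have "(norm ((x - u i) + (x - u j)))\<^sup>2 = 4 * (norm (x - scaleR (1/2) (u i + u j)))\<^sup>2"
      by (simp add: power2_eq_square)
    ultimately have "4 * d \<le> (norm ((x - u i) + (x - u j)))\<^sup>2"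
      by simp
    moreover have "(norm ((x - u i) + (x - u j)))\<^sup>2 + (norm (u i - u j))\<^sup>2
        = 2 * (norm (x - u i))\<^sup>2 + 2 * (norm (x - u j))\<^sup>2"
      using norm_add_square[of "x - u i" "x - u j"] norm_diff_square[of "x - u i" "x - u j"]
        norm_minus_commute[of "u i" "u j"]
      by (simp add: algebra_simps)
    ultimately show ?thesis
      using approx[of i] approx[of j] by linarith
  qed
  show ?thesis
  proof (rule CauchyI)
    fix e :: real
    assume "0 < e"
    then obtain N where "0 < N" and N: "inverse (real N) < e\<^sup>2 / 4"
      using ex_inverse_of_nat_less[of "e\<^sup>2 / 4"] by auto
    have "norm (u i - u j) < e" if "N \<le> i" "N \<le> j" for i j
    proof -
      have "inverse (real (Suc i)) \<le> inverse (real N)" "inverse (real (Suc j)) \<le> inverse (real N)"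
        using that \<open>0 < N\<close> by (simp_all add: le_imp_inverse_le)
      then have "(norm (u i - u j))\<^sup>2 < e\<^sup>2"
        using bound[of i j] N by linarith
      then show ?thesis
        using \<open>0 < e\<close> by (simp add: power_less_imp_less_base)
    qed
    then show "\<exists>N. \<forall>i\<ge>N. \<forall>j\<ge>N. norm (u i - u j) < e"
      by blast
  qed
qed

lemma closest_point_exists:
  fixes x :: "'a::complex_hilbert"
  assumes "closed M" "csubspace M"
  obtains y where "y \<in> M" "\<And>m. m \<in> M \<Longrightarrow> norm (x - y) \<le> norm (x - m)"
proof -
  define d where "d = (INF m\<in>M. (norm (x - m))\<^sup>2)"
  have "M \<noteq> {}"
    using assms(2) by (auto simp: csubspace_def)
  have bdd: "bdd_below ((\<lambda>m. (norm (x - m))\<^sup>2) ` M)"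
    by (rule bdd_belowI[of _ 0]) auto
  have lower: "d \<le> (norm (x - m))\<^sup>2" if "m \<in> M" for m
    unfolding d_def using bdd that by (rule cINF_lower)
  have "\<exists>m\<in>M. (norm (x - m))\<^sup>2 < d + inverse (real (Suc n))" for n
    using cINF_less_iff[OF \<open>M \<noteq> {}\<close> bdd, of "d + inverse (real (Suc n))"]
    unfolding d_def[symmetric] by simp
  then obtain u where mem: "\<And>n. u n \<in> M"
    and approx: "\<And>n. (norm (x - u n))\<^sup>2 < d + inverse (real (Suc n))"
    by metis
  obtain y where lim: "u \<longlonglongrightarrow> y"
    using minimizing_sequence_Cauchy[OF assms(2) lower mem approx]
    by (auto simp: Cauchy_convergent_iff convergent_def)
  have "y \<in> M"
    using assms(1) mem lim closed_sequentially by blast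
  have "(norm (x - y))\<^sup>2 \<le> d"
  proof (rule tendsto_le[OF trivial_limit_sequentially])
    show "(\<lambda>n. d + inverse (real (Suc n))) \<longlonglongrightarrow> d"
      using tendsto_add[OF tendsto_const LIMSEQ_inverse_real_of_nat, of d] by simp
    show "(\<lambda>n. (norm (x - u n))\<^sup>2) \<longlonglongrightarrow> (norm (x - y))\<^sup>2"
      by (intro tendsto_intros lim)
    show "\<forall>\<^sub>F n in sequentially. (norm (x - u n))\<^sup>2 \<le> d + inverse (real (Suc n))"
      by (intro always_eventually allI less_imp_le approx)
  qed
  then have "norm (x - y) \<le> norm (x - m)" if "m \<in> M" for m
    using lower[OF that] by (meson order_trans power2_le_imp_le norm_ge_zero)
  with \<open>y \<in> M\<close> show ?thesis
    by (rule that)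
qed

lemma orthogonal_decomposition_exists:
  fixes x :: "'a::complex_hilbert"
  assumes "closed M" "csubspace M"
  obtains y where "y \<in> M" "\<And>m. m \<in> M \<Longrightarrow> cinner (x - y) m = 0"
proof -
  obtain y where "y \<in> M" and closest: "\<And>m. m \<in> M \<Longrightarrow> norm (x - y) \<le> norm (x - m)"
    using closest_point_exists[OF assms] by blast
  have "cinner (x - y) m = 0" if "m \<in> M" for m
  proof (rule complex_eq_0_if_quadratic_nonneg[where b = "(norm m)\<^sup>2"])
    fix t
    have "y + scaleC t m \<in> M"
      using assms(2) \<open>y \<in> M\<close> that by (simp add: csubspace_def)
    then have "(norm (x - y))\<^sup>2 \<le> (norm ((x - y) - scaleC t m))\<^sup>2"
      using closest by (simp add: diff_diff_eq power_mono)
    then show "0 \<le> (norm m)\<^sup>2 * (cmod t)\<^sup>2 - 2 * Re (cnj t * cinner (x - y) m)"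
      by (simp add: norm_diff_square norm_scaleC cinner_scaleC_right power_mult_distrib mult.commute)
  qed simp
  with \<open>y \<in> M\<close> show ?thesis
    by (rule that)
qed

lemma orthogonal_decomposition_unique:
  assumes "csubspace M" "y \<in> M" "z \<in> M"
    and "\<And>m. m \<in> M \<Longrightarrow> cinner (x - y) m = 0" "\<And>m. m \<in> M \<Longrightarrow> cinner (x - z) m = 0"
  shows "y = z"
proof -
  have "z - y \<in> M"
    using assms(1,3,2) by (rule csubspace_diff)
  have "cinner (z - y) (z - y) = cinner (x - y) (z - y) - cinner (x - z) (z - y)"
    by (simp flip: cinner_diff_left)
  also have "\<dots> = 0"
    using assms(4,5) \<open>z - y \<in> M\<close> by simp
  finally have "cinner (z - y) (z - y) = 0" .
  then show ?thesis
    by (simp add: cinner_eq_zero_iff)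
qed

lemma orth_proj_mem_and_orthogonal:
  assumes "closed M" "csubspace M"
  shows "orth_proj M x \<in> M \<and> (\<forall>m\<in>M. cinner (x - orth_proj M x) m = 0)"
proof -
  obtain y where "y \<in> M" "\<And>m. m \<in> M \<Longrightarrow> cinner (x - y) m = 0"
    using orthogonal_decomposition_exists[OF assms] by blast
  then have "\<exists>!y. y \<in> M \<and> (\<forall>m\<in>M. cinner (x - y) m = 0)"
    using orthogonal_decomposition_unique[OF assms(2)] by blast
  then show ?thesis
    unfolding orth_proj_def by (rule theI')
qed

lemma orth_proj_mem: "closed M \<Longrightarrow> csubspace M \<Longrightarrow> orth_proj M x \<in> M"
  using orth_proj_mem_and_orthogonal by blast

lemma cinner_orth_proj_left:
  assumes "closed M" "csubspace M" "m \<in> M"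
  shows "cinner (orth_proj M v) m = cinner v m"
proof -
  have "cinner (v - orth_proj M v) m = 0"
    using orth_proj_mem_and_orthogonal[OF assms(1,2)] assms(3) by blast
  then show ?thesis
    by (simp add: cinner_diff_left)
qed

lemma cinner_orth_proj_right:
  assumes "closed M" "csubspace M" "m \<in> M"
  shows "cinner m (orth_proj M v) = cinner m v"
  by (subst (1 2) cinner_commute) (simp add: cinner_orth_proj_left[OF assms])

lemma orth_proj_symmetric:
  assumes "closed M" "csubspace M"
  shows "cinner (orth_proj M a) b = cinner a (orth_proj M b)"
proof -
  have "cinner (orth_proj M a) b = cinner (orth_proj M a) (orth_proj M b)"
    by (simp add: cinner_orth_proj_right[OF assms orth_proj_mem[OF assms]])
  also have "\<dots> = cinner a (orth_proj M b)"
    by (simp add: cinner_orth_proj_left[OF assms orth_proj_mem[OF assms]])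
  finally show ?thesis .
qed

lemma riesz_representation:
  fixes f :: "'a::complex_hilbert \<Rightarrow> complex"
  assumes "continuous_on UNIV f"
    and add: "\<And>x y. f (x + y) = f x + f y"
    and hom: "\<And>c x. f (scaleC c x) = c * f x"
  obtains z where "\<And>x. f x = cinner x z"
proof (cases "\<forall>x. f x = 0")
  case True
  then show ?thesis
    using that[of 0] by simp
next
  case False
  then obtain u where "f u \<noteq> 0"
    by blast
  have f_diff: "f (x - y) = f x - f y" for x y
    using add[of "x - y" y] by simp
  define N where "N = {x. f x = 0}"
  have "closed N"
    unfolding N_def by (rule closed_Collect_eq[OF assms(1) continuous_on_const])
  moreover have "csubspace N"
    unfolding N_def csubspace_def using add[of 0 0] add hom by simp
  ultimately obtain y where "y \<in> N" and orth: "\<And>m. m \<in> N \<Longrightarrow> cinner (u - y) m = 0"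
    using orthogonal_decomposition_exists by blast
  define v where "v = u - y"
  have "f v = f u"
    using \<open>y \<in> N\<close> f_diff by (simp add: v_def N_def)
  then have "v \<noteq> 0"
    using \<open>f u \<noteq> 0\<close> add[of 0 0] by auto
  then have "cinner v v \<noteq> 0"
    by (simp add: cinner_eq_zero_iff)
  have "f x = cinner x (scaleC (cnj (f v / cinner v v)) v)" for x
  proof -
    \<comment> \<open>\<open>f x v - f v x\<close> lies in the kernel \<open>N\<close>, which is orthogonal to \<open>v\<close>.\<close>
    have "f (scaleC (f x) v - scaleC (f v) x) = 0"
      using f_diff hom by (simp add: mult.commute)
    then have "cinner v (scaleC (f x) v - scaleC (f v) x) = 0"
      using orth by (simp add: N_def v_def)
    then have "cinner (scaleC (f x) v - scaleC (f v) x) v = 0"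
      by (subst cinner_eq_zero_commute)
    then have "f x * cinner v v - f v * cinner x v = 0"
      by (simp add: cinner_diff_left cinner_scaleC_left)
    then show ?thesis
      using \<open>cinner v v \<noteq> 0\<close> by (simp add: cinner_scaleC_right field_simps)
  qed
  then show ?thesis
    by (rule that)
qed

lemma adjoint_exists:
  fixes C :: "'a::complex_hilbert \<Rightarrow> 'a"
  assumes "bounded_clinear C"
  obtains D where "\<And>x y. cinner (C x) y = cinner x (D y)"
proof -
  have "\<exists>z. \<forall>x. cinner (C x) y = cinner x z" for y
  proof (rule riesz_representation[of "\<lambda>x. cinner (C x) y"])
    show "continuous_on UNIV (\<lambda>x. cinner (C x) y)"
      by (intro continuous_intros bounded_clinear_continuous_on[OF assms])
    show "cinner (C (x + x')) y = cinner (C x) y + cinner (C x') y" for x x'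
      by (simp add: bounded_clinear_add[OF assms] cinner_add_left)
    show "cinner (C (scaleC c x)) y = c * cinner (C x) y" for c x
      by (simp add: bounded_clinear_scaleC[OF assms] cinner_scaleC_left)
  qed blast
  then obtain D where "\<And>y. \<forall>x. cinner (C x) y = cinner x (D y)"
    by metis
  with that show ?thesis
    by blast
qed

lemma adjoint_eqI:
  fixes C D :: "'a::complex_hilbert \<Rightarrow> 'a"
  assumes "\<And>x y. cinner (C x) y = cinner x (D y)"
  shows "Defs.adjoint C = D"
  unfolding Defs.adjoint_def
proof (rule the_equality)
  show "\<forall>x y. cinner (C x) y = cinner x (D y)"
    using assms by blast
  show "D' = D" if "\<forall>x y. cinner (C x) y = cinner x (D' y)" for D'
  proof
    fix y
    show "D' y = D y"
      using that assms by (intro cinner_ext_right) simp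
  qed
qed

definition A_symmetric :: "('a::complex_hilbert \<Rightarrow> 'a) \<Rightarrow> ('a \<Rightarrow> 'a) \<Rightarrow> bool" where
  "A_symmetric A C \<longleftrightarrow> (\<forall>u v. cinner (A (C u)) v = cinner (A u) (C v))"

lemma A_selfadjoint_iff_A_symmetric:
  fixes A C D :: "'a::complex_hilbert \<Rightarrow> 'a"
  assumes "\<And>x y. cinner (C x) y = cinner x (D y)"
  shows "A_selfadjoint A C \<longleftrightarrow> A_symmetric A C"
proof -
  have "cinner (D (A u)) v = cinner (A u) (C v)" for u v
    using assms[of v "A u"] by (subst (1 2) cinner_commute) simp
  moreover have "A \<circ> C = D \<circ> A \<longleftrightarrow> (\<forall>u v. cinner (A (C u)) v = cinner (D (A u)) v)"
    by (auto simp: fun_eq_iff intro: cinner_ext_left)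
  ultimately show ?thesis
    unfolding A_selfadjoint_def A_symmetric_def adjoint_eqI[OF assms] by simp
qed

abbreviation range_proj :: "('a::complex_hilbert \<Rightarrow> 'a) \<Rightarrow> 'a \<Rightarrow> 'a" where
  "range_proj A \<equiv> orth_proj (closure (range A))"

context
  fixes A :: "'a::complex_hilbert \<Rightarrow> 'a"
  assumes positive: "positive_op A"
begin

lemma positive_op_bounded_clinear: "bounded_clinear A"
  using positive unfolding positive_op_def by blast

lemma positive_op_nonneg: "0 \<le> Re (cinner (A x) x)"
  using positive unfolding positive_op_def by blast

lemma positive_op_hermitian: "cinner (A x) y = cinner x (A y)"
proof -
  note linear = bounded_clinear_add[OF positive_op_bounded_clinear]
    bounded_clinear_scaleC[OF positive_op_bounded_clinear]
  have real: "Im (cinner (A u) u) = 0" for u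
    using positive unfolding positive_op_def by blast
  have "cinner (A (x + y)) (x + y) = cinner (A x) x + cinner (A y) y + cinner (A x) y + cinner (A y) x"
    by (simp add: linear cinner_add_left cinner_add_right)
  then have "Im (cinner (A x) y) + Im (cinner (A y) x) = 0"
    using real[of "x + y"] real[of x] real[of y] by simp
  moreover have "cinner (A (x + scaleC \<i> y)) (x + scaleC \<i> y) =
      cinner (A x) x + cinner (A y) y - \<i> * cinner (A x) y + \<i> * cinner (A y) x"
    by (simp add: linear cinner_add_left cinner_add_right cinner_scaleC_left cinner_scaleC_right
        algebra_simps)
  then have "Re (cinner (A y) x) - Re (cinner (A x) y) = 0"
    using real[of "x + scaleC \<i> y"] real[of x] real[of y] by simp
  ultimately have "cinner (A x) y = cnj (cinner (A y) x)"
    by (simp add: complex_eq_iff)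
  also have "\<dots> = cinner x (A y)"
    by (simp flip: cinner_commute)
  finally show ?thesis .
qed

lemma A_norm_le_iff: "A_norm A u \<le> A_norm A v \<longleftrightarrow> Re (cinner (A u) u) \<le> Re (cinner (A v) v)"
  using positive_op_nonneg unfolding A_norm_def by simp

lemma A_quadratic_diff_scaleC:
  "Re (cinner (A (e - scaleC t s)) (e - scaleC t s)) =
     Re (cinner (A e) e) + (cmod t)\<^sup>2 * Re (cinner (A s) s) - 2 * Re (cnj t * cinner (A e) s)"
proof -
  note linear = bounded_clinear_diff[OF positive_op_bounded_clinear]
    bounded_clinear_scaleC[OF positive_op_bounded_clinear]
  have "cinner (A (e - scaleC t s)) (e - scaleC t s) = cinner (A e) e - cnj t * cinner (A e) s
      - t * cinner (A s) e + t * cnj t * cinner (A s) s"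
    by (simp add: linear cinner_diff_left cinner_diff_right cinner_scaleC_left cinner_scaleC_right
        algebra_simps)
  moreover have "cinner (A s) e = cnj (cinner (A e) s)"
    by (simp add: positive_op_hermitian flip: cinner_commute)
  moreover have "Re (t * cnj (cinner (A e) s)) = Re (cnj t * cinner (A e) s)"
    by simp
  ultimately show ?thesis
    by (simp flip: complex_norm_square)
qed

lemma csubspace_closure_range: "csubspace (closure (range A))"
  by (intro csubspace_closure csubspace_range positive_op_bounded_clinear)

lemmas range_proj_props = closed_closure csubspace_closure_range

lemma A_range_proj [simp]: "A (range_proj A x) = A x"
proof (rule cinner_ext_left)
  fix w
  have "A w \<in> closure (range A)"
    by (simp add: closure_subset[THEN subsetD])
  then show "cinner (A (range_proj A x)) w = cinner (A x) w"
    by (simp add: positive_op_hermitian cinner_orth_proj_left[OF range_proj_props])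
qed

lemma cinner_range_proj_right [simp]: "cinner (A u) (range_proj A v) = cinner (A u) v"
  by (rule cinner_orth_proj_right[OF range_proj_props]) (simp add: closure_subset[THEN subsetD])

lemma eq_0_if_mem_closure_range_kernel:
  assumes "z \<in> closure (range A)" "A z = 0"
  shows "z = 0"
proof -
  have "range A \<subseteq> {m. cinner z m = 0}"
    using assms(2) by (auto simp flip: positive_op_hermitian)
  moreover have "closed {m. cinner z m = 0}"
    by (intro closed_Collect_eq continuous_intros)
  ultimately have "closure (range A) \<subseteq> {m. cinner z m = 0}"
    by (rule closure_minimal)
  with assms(1) have "cinner z z = 0"
    by blast
  then show ?thesis
    by (simp add: cinner_eq_zero_iff)
qed

lemma A_symmetric_comp_range_proj:
  assumes "A_symmetric A T"
  shows "A (T (range_proj A u)) = A (T u)"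
proof (rule cinner_ext_left)
  show "cinner (A (T (range_proj A u))) w = cinner (A (T u)) w" for w
    using assms unfolding A_symmetric_def by simp
qed

lemma A_selfadjoint_range_proj_comp_iff:
  assumes "bounded_clinear T"
  shows "A_selfadjoint A (range_proj A \<circ> T) \<longleftrightarrow> A_symmetric A T"
proof -
  obtain T' where T': "\<And>x y. cinner (T x) y = cinner x (T' y)"
    using adjoint_exists[OF assms] by blast
  have "cinner ((range_proj A \<circ> T) x) y = cinner x ((T' \<circ> range_proj A) y)" for x y
    by (simp add: orth_proj_symmetric[OF range_proj_props] T')
  then have "A_selfadjoint A (range_proj A \<circ> T) \<longleftrightarrow> A_symmetric A (range_proj A \<circ> T)"
    by (rule A_selfadjoint_iff_A_symmetric)
  also have "\<dots> \<longleftrightarrow> A_symmetric A T"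
    by (simp add: A_symmetric_def)
  finally show ?thesis .
qed

lemma range_proj_comp_idempotent_iff:
  assumes "A_symmetric A T"
  shows "(range_proj A \<circ> T) \<circ> (range_proj A \<circ> T) = range_proj A \<circ> T
    \<longleftrightarrow> (\<forall>x. A (T (T x)) = A (T x))"
proof
  assume idem: "(range_proj A \<circ> T) \<circ> (range_proj A \<circ> T) = range_proj A \<circ> T"
  show "\<forall>x. A (T (T x)) = A (T x)"
  proof
    fix x
    have "A (T (T x)) = A (range_proj A (T (range_proj A (T x))))"
      by (simp add: A_symmetric_comp_range_proj[OF assms])
    also have "\<dots> = A (T x)"
      using idem by (simp add: fun_eq_iff)
    finally show "A (T (T x)) = A (T x)" .
  qed
next
  assume ATT: "\<forall>x. A (T (T x)) = A (T x)"
  have "range_proj A (T (range_proj A (T x))) = range_proj A (T x)" for x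
  proof -
    let ?z = "range_proj A (T (range_proj A (T x))) - range_proj A (T x)"
    have "?z \<in> closure (range A)"
      by (intro csubspace_diff csubspace_closure_range orth_proj_mem range_proj_props)
    moreover have "A ?z = 0"
      using ATT by (simp add: bounded_clinear_diff[OF positive_op_bounded_clinear]
          A_symmetric_comp_range_proj[OF assms])
    ultimately have "?z = 0"
      by (rule eq_0_if_mem_closure_range_kernel)
    then show ?thesis
      by simp
  qed
  then show "(range_proj A \<circ> T) \<circ> (range_proj A \<circ> T) = range_proj A \<circ> T"
    by (simp add: fun_eq_iff)
qed

lemma A_projection_imp_residual_orthogonal:
  assumes "bounded_clinear T" "A_projection A T"
  shows "cinner (A (y - T y)) (T w) = 0"
proof (rule complex_eq_0_if_quadratic_nonneg[where b = "Re (cinner (A (T w)) (T w))"])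
  fix t
  have "T y + scaleC t (T w) = T (y + scaleC t w)"
    by (simp add: bounded_clinear_add[OF assms(1)] bounded_clinear_scaleC[OF assms(1)])
  then have "T y + scaleC t (T w) \<in> closure (range T)"
    by (simp add: closure_subset[THEN subsetD])
  then have "A_norm A (y - T y) \<le> A_norm A ((y - T y) - scaleC t (T w))"
    using assms(2) unfolding A_projection_def by (simp add: diff_diff_eq)
  then show "0 \<le> Re (cinner (A (T w)) (T w)) * (cmod t)\<^sup>2 - 2 * Re (cnj t * cinner (A (y - T y)) (T w))"
    unfolding A_norm_le_iff A_quadratic_diff_scaleC by (simp add: mult.commute)
qed (rule positive_op_nonneg)

lemma residual_orthogonal_imp_A_projection:
  assumes "bounded_clinear T" and orth: "\<And>y w. cinner (A (y - T y)) (T w) = 0"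
  shows "A_projection A T"
  unfolding A_projection_def
proof (intro allI ballI)
  fix y s
  assume s: "s \<in> closure (range T)"
  have "A_norm A (y - T y) \<le> A_norm A (y - T t)" for t
  proof -
    have split: "y - T t = (y - T y) - scaleC 1 (T (t - y))"
      by (simp add: scaleC_one bounded_clinear_diff[OF assms(1)])
    show ?thesis
      unfolding A_norm_le_iff split A_quadratic_diff_scaleC
      using orth[of y "t - y"] positive_op_nonneg[of "T (t - y)"] by simp
  qed
  then have "range T \<subseteq> {s. A_norm A (y - T y) \<le> A_norm A (y - s)}"
    by blast
  moreover have "closed {s. A_norm A (y - T y) \<le> A_norm A (y - s)}"
    unfolding A_norm_def bounded_clinear_diff[OF positive_op_bounded_clinear]
    by (intro closed_Collect_le continuous_intros
        bounded_clinear_continuous_on[OF positive_op_bounded_clinear])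
  ultimately have "closure (range T) \<subseteq> {s. A_norm A (y - T y) \<le> A_norm A (y - s)}"
    by (rule closure_minimal)
  with s show "A_norm A (y - T y) \<le> A_norm A (y - s)"
    by blast
qed

lemma residual_orthogonal_iff:
  assumes "bounded_clinear T"
  shows "(\<forall>y w. cinner (A (y - T y)) (T w) = 0) \<longleftrightarrow> A_symmetric A T \<and> (\<forall>x. A (T (T x)) = A (T x))"
proof
  assume orth: "\<forall>y w. cinner (A (y - T y)) (T w) = 0"
  have on_range: "cinner (A y) (T w) = cinner (A (T y)) (T w)" for y w
    using orth by (simp add: bounded_clinear_diff[OF positive_op_bounded_clinear] cinner_diff_left)
  have symm: "cinner (A (T y)) w = cinner (A y) (T w)" for y w
  proof -
    have "cinner (A y) (T w) = cinner (T y) (A (T w))"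
      by (subst on_range[of y w]) (rule positive_op_hermitian)
    also have "\<dots> = cnj (cinner (A w) (T y))"
      by (subst cinner_commute) (simp only: on_range[of w y])
    also have "\<dots> = cinner (A (T y)) w"
      by (simp only: positive_op_hermitian[of w] positive_op_hermitian[of "T y"] cinner_commute[of "T y"])
    finally show ?thesis
      by simp
  qed
  have "A (T (T x)) = A (T x)" for x
  proof (rule cinner_ext_left)
    fix w
    have "cinner (A (T (T x))) w = cinner (A (T x)) (T w)"
      by (rule symm)
    also have "\<dots> = cinner (A x) (T w)"
      by (rule on_range[symmetric])
    also have "\<dots> = cinner (A (T x)) w"
      by (rule symm[symmetric])
    finally show "cinner (A (T (T x))) w = cinner (A (T x)) w" .
  qed
  with symm show "A_symmetric A T \<and> (\<forall>x. A (T (T x)) = A (T x))"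
    unfolding A_symmetric_def by blast
next
  assume "A_symmetric A T \<and> (\<forall>x. A (T (T x)) = A (T x))"
  then have symm: "A_symmetric A T" and ATT: "\<And>x. A (T (T x)) = A (T x)"
    by blast+
  show "\<forall>y w. cinner (A (y - T y)) (T w) = 0"
  proof (intro allI)
    fix y w
    have "cinner (A (y - T y)) (T w) = cinner (A (T (y - T y))) w"
      using symm unfolding A_symmetric_def by simp
    also have "\<dots> = 0"
      by (simp add: bounded_clinear_diff[OF assms] bounded_clinear_diff[OF positive_op_bounded_clinear] ATT)
    finally show "cinner (A (y - T y)) (T w) = 0" .
  qed
qed

end

theorem mainTheorem3:
  fixes A T :: "'a::complex_hilbert \<Rightarrow> 'a"
  assumes "separable_hilbert TYPE('a)"
    and "positive_op A"
    and "bounded_clinear T"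
  shows "A_projection A T \<longleftrightarrow>
           ((orth_proj (closure (range A)) \<circ> T) \<circ> (orth_proj (closure (range A)) \<circ> T)
              = orth_proj (closure (range A)) \<circ> T
            \<and> A_selfadjoint A (orth_proj (closure (range A)) \<circ> T))"
proof -
  have "A_projection A T \<longleftrightarrow> (\<forall>y w. cinner (A (y - T y)) (T w) = 0)"
    using A_projection_imp_residual_orthogonal[OF assms(2,3)]
      residual_orthogonal_imp_A_projection[OF assms(2,3)] by blast
  also have "\<dots> \<longleftrightarrow> A_symmetric A T \<and> (\<forall>x. A (T (T x)) = A (T x))"
    by (rule residual_orthogonal_iff[OF assms(2,3)])
  also have "\<dots> \<longleftrightarrow> (range_proj A \<circ> T) \<circ> (range_proj A \<circ> T) = range_proj A \<circ> T
      \<and> A_selfadjoint A (range_proj A \<circ> T)"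
    using range_proj_comp_idempotent_iff[OF assms(2)]
      A_selfadjoint_range_proj_comp_iff[OF assms(2,3)] by blast
  finally show ?thesis .
qed

end
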